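(* Let $C>0$ and let $n\ge N\ge1$ be integers. Let $\mathcal{C}^+_{n,C}=\{f\in\mathbb{R}^n: -C\le f[1]\le\dots\le f[n]\le C\}$. For $j=0,\dots,N-1$ define $h_j^+\in\mathbb{R}^n$ by $h_j^+[i]=0$ if $i\le\lfloor jn/N\rfloor$ and $h_j^+[i]=1$ otherwise, and let $H_+=\mathrm{span}(h_0^+,\dots,h_{N-1}^+)$. Set $\delta=2\sqrt2\,C/\sqrt N$. Then for every $f\in\mathcal{C}^+_{n,C}$, $$\inf_{h\in H_+}\|f-h\|_n\le\delta,$$ where $\|v\|_n^2=\frac1n\sum_{i=1}^nv[i]^2$. *)

theory Defs
  imports "HOL-Analysis.Analysis" "HOL-Library.Function_Algebras"
begin

text \<open>Vectors in R^n are represented as functions nat => real, indices 1..n used.\<close>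

definition fscale :: "real \<Rightarrow> (nat \<Rightarrow> real) \<Rightarrow> (nat \<Rightarrow> real)" where
  "fscale c f = (\<lambda>i. c * f i)"

definition fspan :: "(nat \<Rightarrow> real) set \<Rightarrow> (nat \<Rightarrow> real) set" where
  "fspan S = module.span fscale S"

definition normn :: "nat \<Rightarrow> (nat \<Rightarrow> real) \<Rightarrow> real" where
  "normn n v = sqrt ((1 / real n) * (\<Sum>i=1..n. (v i)^2))"

definition monotone_cone :: "nat \<Rightarrow> real \<Rightarrow> (nat \<Rightarrow> real) set" where
  "monotone_cone n C = {f. (\<forall>i\<in>{1..n}. - C \<le> f i \<and> f i \<le> C) \<and>
                           (\<forall>i j. 1 \<le> i \<longrightarrow> i \<le> j \<longrightarrow> j \<le> n \<longrightarrow> f i \<le> f j)}"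

definition hplus :: "nat \<Rightarrow> nat \<Rightarrow> nat \<Rightarrow> (nat \<Rightarrow> real)" where
  "hplus n N j = (\<lambda>i. if i \<le> (j * n) div N then 0 else 1)"

lemma module_fscale: "module fscale"
  by unfold_locales (auto simp: fscale_def algebra_simps fun_eq_iff)

end

theory Submission
  imports Defs
begin

text \<open>Cut \<open>{1..n}\<close> at the breakpoints \<open>b\<^sub>j = \<lfloor>j n / N\<rfloor>\<close> into \<open>N\<close> blocks of length at most
  \<open>2n/N\<close>. The combination of the \<open>h\<^sub>j\<^sup>+\<close> with telescoping coefficients is the step function
  equal to \<open>f(b\<^sub>j\<^sub>+\<^sub>1)\<close> on the \<open>j\<close>-th block; since \<open>f\<close> is nondecreasing, its error there is at
  most the oscillation \<open>D\<^sub>j = f(b\<^sub>j\<^sub>+\<^sub>1) - f(b\<^sub>j + 1) \<ge> 0\<close>. The oscillations add up to at most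
  \<open>f(n) - f(1) \<le> 2C\<close>, so \<open>\<Sum> D\<^sub>j\<^sup>2 \<le> (\<Sum> D\<^sub>j)\<^sup>2 \<le> 4C\<^sup>2\<close>, and the squared error is at most
  \<open>(2n/N) 4C\<^sup>2\<close>, i.e. \<open>\<parallel>f - h\<parallel>\<^sub>n\<^sup>2 \<le> 8C\<^sup>2/N\<close>.\<close>

lemma sum_fun_apply: "sum g A x = (\<Sum>a\<in>A. (g a :: 'b \<Rightarrow> 'c::comm_monoid_add) x)"
  by (induction A rule: infinite_finite_induct) auto

lemma sum_atMost_differences:
  fixes v :: "nat \<Rightarrow> 'a::ab_group_add"
  shows "(\<Sum>k\<le>j. v k - (if k = 0 then 0 else v (k - 1))) = v j"
  by (induction j) auto

lemma sum_power2_le_power2_sum: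
  fixes D :: "'a \<Rightarrow> real"
  assumes "finite A" and "\<And>j. j \<in> A \<Longrightarrow> 0 \<le> D j"
  shows "(\<Sum>j\<in>A. (D j)\<^sup>2) \<le> (\<Sum>j\<in>A. D j)\<^sup>2"
proof -
  have "(\<Sum>j\<in>A. (D j)\<^sup>2) \<le> (\<Sum>j\<in>A. D j * (\<Sum>k\<in>A. D k))"
  proof (rule sum_mono)
    fix j assume j: "j \<in> A"
    have "D j \<le> (\<Sum>k\<in>A. D k)"
      using member_le_sum[OF j] assms by auto
    then show "(D j)\<^sup>2 \<le> D j * (\<Sum>k\<in>A. D k)"
      using assms(2)[OF j] by (simp add: power2_eq_square mult_left_mono)
  qed
  also have "\<dots> = (\<Sum>j\<in>A. D j)\<^sup>2"
    by (simp add: sum_distrib_right power2_eq_square)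
  finally show ?thesis .
qed

lemma sum_greaterThanAtMost_blocks:
  fixes b :: "nat \<Rightarrow> nat" and g :: "nat \<Rightarrow> 'a::comm_monoid_add"
  assumes "mono b"
  shows "(\<Sum>i\<in>{b 0<..b K}. g i) = (\<Sum>j<K. \<Sum>i\<in>{b j<..b (Suc j)}. g i)"
proof (induction K)
  case 0
  then show ?case by simp
next
  case (Suc K)
  have "b 0 \<le> b K" "b K \<le> b (Suc K)"
    using assms by (auto simp: mono_def)
  then have "{b 0<..b (Suc K)} = {b 0<..b K} \<union> {b K<..b (Suc K)}"
    by auto
  then have "(\<Sum>i\<in>{b 0<..b (Suc K)}. g i)
      = (\<Sum>i\<in>{b 0<..b K}. g i) + (\<Sum>i\<in>{b K<..b (Suc K)}. g i)"
    by (simp add: sum.union_disjoint ivl_disj_int)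
  then show ?case
    using Suc by simp
qed

lemma sum_power2_le_by_blocks:
  fixes g D :: "nat \<Rightarrow> real" and b :: "nat \<Rightarrow> nat"
  assumes "mono b" and "0 \<le> L"
    and block_length: "\<And>j. j < K \<Longrightarrow> real (b (Suc j) - b j) \<le> L"
    and D_nonneg: "\<And>j. j < K \<Longrightarrow> 0 \<le> D j"
    and block_bound: "\<And>j i. j < K \<Longrightarrow> b j < i \<Longrightarrow> i \<le> b (Suc j) \<Longrightarrow> \<bar>g i\<bar> \<le> D j"
  shows "(\<Sum>i\<in>{b 0<..b K}. (g i)\<^sup>2) \<le> L * (\<Sum>j<K. D j)\<^sup>2"
proof -
  have "(\<Sum>i\<in>{b 0<..b K}. (g i)\<^sup>2) = (\<Sum>j<K. \<Sum>i\<in>{b j<..b (Suc j)}. (g i)\<^sup>2)"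
    by (rule sum_greaterThanAtMost_blocks[OF \<open>mono b\<close>])
  also have "\<dots> \<le> (\<Sum>j<K. L * (D j)\<^sup>2)"
  proof (rule sum_mono)
    fix j assume "j \<in> {..<K}"
    then have j: "j < K" by simp
    have "(\<Sum>i\<in>{b j<..b (Suc j)}. (g i)\<^sup>2) \<le> (\<Sum>i\<in>{b j<..b (Suc j)}. (D j)\<^sup>2)"
      using block_bound[OF j] D_nonneg[OF j] by (intro sum_mono) (simp add: power2_le_iff_abs_le)
    also have "\<dots> = real (b (Suc j) - b j) * (D j)\<^sup>2"
      by simp
    also have "\<dots> \<le> L * (D j)\<^sup>2"
      using block_length[OF j] by (rule mult_right_mono) simp
    finally show "(\<Sum>i\<in>{b j<..b (Suc j)}. (g i)\<^sup>2) \<le> L * (D j)\<^sup>2" .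
  qed
  also have "\<dots> = L * (\<Sum>j<K. (D j)\<^sup>2)"
    by (simp add: sum_distrib_left)
  also have "\<dots> \<le> L * (\<Sum>j<K. D j)\<^sup>2"
    using D_nonneg \<open>0 \<le> L\<close> by (intro mult_left_mono sum_power2_le_power2_sum) auto
  finally show ?thesis .
qed

lemma sum_oscillations_le:
  fixes f :: "nat \<Rightarrow> real" and b :: "nat \<Rightarrow> nat"
  assumes "strict_mono b" and "mono_on {b 0 + 1..b (Suc K)} f"
  shows "(\<Sum>j<Suc K. f (b (Suc j)) - f (b j + 1)) \<le> f (b (Suc K)) - f (b 0 + 1)"
  using assms(2)
proof (induction K)
  case 0
  then show ?case by simp
next
  case (Suc K)
  have b_lt: "b 0 < b (Suc K)" "b (Suc K) < b (Suc (Suc K))"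
    using \<open>strict_mono b\<close> by (auto simp: strict_mono_def)
  have "mono_on {b 0 + 1..b (Suc K)} f"
    using b_lt by (auto intro: mono_on_subset[OF Suc.prems])
  then have "(\<Sum>j<Suc K. f (b (Suc j)) - f (b j + 1)) \<le> f (b (Suc K)) - f (b 0 + 1)"
    by (rule Suc.IH)
  moreover have "f (b (Suc K)) \<le> f (b (Suc K) + 1)"
    using b_lt by (intro mono_onD[OF Suc.prems]) auto
  ultimately show ?case
    by simp
qed

lemma normn_nonneg: "0 \<le> normn n v"
  by (simp add: normn_def sum_nonneg)

lemma normn_le:
  assumes "0 < n" and "0 \<le> B" and "(\<Sum>i=1..n. (v i)\<^sup>2) \<le> real n * B\<^sup>2"
  shows "normn n v \<le> B"
  unfolding normn_def
proof (rule real_le_lsqrt)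
  have "1 / real n * (\<Sum>i=1..n. (v i)\<^sup>2) \<le> 1 / real n * (real n * B\<^sup>2)"
    using assms by (intro mult_left_mono) auto
  then show "1 / real n * (\<Sum>i=1..n. (v i)\<^sup>2) \<le> B\<^sup>2"
    using assms(1) by simp
qed (fact assms(2))

definition breakpoint :: "nat \<Rightarrow> nat \<Rightarrow> nat \<Rightarrow> nat" where
  "breakpoint n N j = j * n div N"

lemma hplus_breakpoint: "hplus n N j = (\<lambda>i. if i \<le> breakpoint n N j then 0 else 1)"
  by (simp add: hplus_def breakpoint_def)

lemma mono_breakpoint: "mono (breakpoint n N)"
  by (auto simp: mono_def breakpoint_def intro: div_le_mono)

lemma breakpoint_0 [simp]: "breakpoint n N 0 = 0"
  by (simp add: breakpoint_def)

lemma breakpoint_self: "0 < N \<Longrightarrow> breakpoint n N N = n"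
  by (simp add: breakpoint_def)

lemma breakpoint_less_Suc:
  assumes "0 < N" and "N \<le> n"
  shows "breakpoint n N j < breakpoint n N (Suc j)"
proof -
  have "(j * n + N) div N \<le> (j * n + n) div N"
    using assms(2) by (intro div_le_mono) simp
  moreover have "(j * n + N) div N = j * n div N + 1"
    using assms(1) by simp
  ultimately show ?thesis
    by (simp add: breakpoint_def add.commute)
qed

lemma strict_mono_breakpoint: "0 < N \<Longrightarrow> N \<le> n \<Longrightarrow> strict_mono (breakpoint n N)"
  by (simp add: strict_mono_Suc_iff breakpoint_less_Suc)

lemma breakpoint_block_length:
  assumes "0 < N" and "N \<le> n"
  shows "real (breakpoint n N (Suc j) - breakpoint n N j) \<le> 2 * real n / real N"
proof -
  have "N * breakpoint n N (Suc j) \<le> Suc j * n"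
    unfolding breakpoint_def by (simp add: mult.commute times_div_less_eq_dividend)
  moreover have "j * n < N * (breakpoint n N j + 1)"
  proof -
    have "j * n = N * breakpoint n N j + j * n mod N"
      by (simp add: breakpoint_def)
    then show ?thesis
      using mod_less_divisor[OF assms(1), of "j * n"] by (subst distrib_left) linarith
  qed
  ultimately have "(breakpoint n N (Suc j) - breakpoint n N j) * N \<le> 2 * n"
    using assms(2) by (simp add: algebra_simps diff_mult_distrib)
  then have "real (breakpoint n N (Suc j) - breakpoint n N j) * real N \<le> 2 * real n"
    by (metis of_nat_le_iff of_nat_mult of_nat_numeral)
  then show ?thesis
    using assms(1) by (simp add: field_simps)
qed

text \<open>On the \<open>j\<close>-th block exactly the generators \<open>h\<^sub>0\<^sup>+, \<dots>, h\<^sub>j\<^sup>+\<close> equal \<open>1\<close>.\<close>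

lemma sum_fscale_hplus_apply:
  assumes "j < N" and "breakpoint n N j < i" and "i \<le> breakpoint n N (Suc j)"
  shows "(\<Sum>k<N. fscale (c k) (hplus n N k)) i = (\<Sum>k\<le>j. c k)"
proof -
  have active: "i \<le> breakpoint n N k \<longleftrightarrow> j < k" for k
  proof
    assume "j < k"
    then show "i \<le> breakpoint n N k"
      using monoD[OF mono_breakpoint[of n N], of "Suc j" k] assms(3) by simp
  next
    assume "i \<le> breakpoint n N k"
    then show "j < k"
      using monoD[OF mono_breakpoint[of n N], of k j] assms(2) by (cases "j < k") auto
  qed
  have "(\<Sum>k<N. fscale (c k) (hplus n N k)) i = (\<Sum>k\<in>{..<N} \<inter> {..j}. c k)"
    unfolding sum_fun_apply sum.inter_restrict[OF finite_lessThan]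
    by (intro sum.cong) (auto simp: fscale_def hplus_breakpoint active)
  also have "{..<N} \<inter> {..j} = {..j}"
    using assms(1) by auto
  finally show ?thesis .
qed

definition step_approx :: "nat \<Rightarrow> nat \<Rightarrow> (nat \<Rightarrow> real) \<Rightarrow> nat \<Rightarrow> real" where
  "step_approx n N f = (\<Sum>k<N. fscale
     (f (breakpoint n N (Suc k)) - (if k = 0 then 0 else f (breakpoint n N k))) (hplus n N k))"

lemma step_approx_in_fspan: "step_approx n N f \<in> fspan (hplus n N ` {0..<N})"
proof -
  interpret module fscale
    by (rule module_fscale)
  show ?thesis
    unfolding step_approx_def fspan_def by (intro span_sum span_scale span_base) auto
qed

lemma step_approx_apply:
  assumes "j < N" and "breakpoint n N j < i" and "i \<le> breakpoint n N (Suc j)"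
  shows "step_approx n N f i = f (breakpoint n N (Suc j))"
  using sum_fscale_hplus_apply[OF assms] sum_atMost_differences[of "\<lambda>k. f (breakpoint n N (Suc k))" j]
  by (simp add: step_approx_def cong: if_cong)

lemma sum_power2_step_approx_error_le:
  fixes f :: "nat \<Rightarrow> real"
  assumes "0 < N" and "N \<le> n" and f_mono: "mono_on {1..n} f"
  shows "(\<Sum>i=1..n. (f i - step_approx n N f i)\<^sup>2) \<le> 2 * real n / real N * (f n - f 1)\<^sup>2"
proof -
  let ?b = "breakpoint n N"
  have b_N: "?b N = n"
    using \<open>0 < N\<close> by (rule breakpoint_self)
  define D where "D j = f (?b (Suc j)) - f (?b j + 1)" for j
  have error_on_block: "\<bar>f i - step_approx n N f i\<bar> \<le> D j"
    if j: "j < N" "?b j < i" "i \<le> ?b (Suc j)" for i j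
  proof -
    have "?b (Suc j) \<le> n"
      using monoD[OF mono_breakpoint[of n N], of "Suc j" N] j(1) b_N by simp
    then have "f (?b j + 1) \<le> f i" "f i \<le> f (?b (Suc j))"
      using j by (auto intro!: mono_onD[OF f_mono])
    then show ?thesis
      using step_approx_apply[OF j, of f] by (simp add: D_def)
  qed
  have D_nonneg: "0 \<le> D j" if "j < N" for j
    using error_on_block[OF that breakpoint_less_Suc[OF assms(1,2)] order_refl] by linarith
  have "(\<Sum>j<Suc (N - 1). D j) \<le> f (?b (Suc (N - 1))) - f (?b 0 + 1)"
    unfolding D_def using f_mono b_N \<open>0 < N\<close>
    by (intro sum_oscillations_le strict_mono_breakpoint assms(2)) auto
  then have sum_D: "(\<Sum>j<N. D j) \<le> f n - f 1"
    using b_N \<open>0 < N\<close> by simp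
  have blocks_cover: "{1..n} = {?b 0<..?b N}"
    using b_N by auto
  have "(\<Sum>i=1..n. (f i - step_approx n N f i)\<^sup>2) \<le> 2 * real n / real N * (\<Sum>j<N. D j)\<^sup>2"
    unfolding blocks_cover
    by (intro sum_power2_le_by_blocks mono_breakpoint breakpoint_block_length error_on_block D_nonneg
        assms(1,2)) auto
  also have "\<dots> \<le> 2 * real n / real N * (f n - f 1)\<^sup>2"
    using sum_D D_nonneg by (intro mult_left_mono power_mono sum_nonneg) auto
  finally show ?thesis .
qed

theorem lemma5:
  fixes C :: real and n N :: nat and f :: "nat \<Rightarrow> real"
  assumes "C > 0" and "1 \<le> N" and "N \<le> n"
    and "f \<in> monotone_cone n C"
  shows "(INF h \<in> fspan (hplus n N ` {0..<N}). normn n (f - h))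
           \<le> 2 * sqrt 2 * C / sqrt (real N)"
proof -
  let ?h = "step_approx n N f"
  have f_bounds: "- C \<le> f 1" "f 1 \<le> f n" "f n \<le> C"
    using assms(2-4) by (auto simp: monotone_cone_def)
  have f_mono: "mono_on {1..n} f"
    using assms(4) by (auto simp: monotone_cone_def intro!: mono_onI)
  have "(\<Sum>i=1..n. ((f - ?h) i)\<^sup>2) \<le> 2 * real n / real N * (f n - f 1)\<^sup>2"
    using sum_power2_step_approx_error_le[OF _ assms(3) f_mono] assms(2) by simp
  also have "\<dots> \<le> 2 * real n / real N * (2 * C)\<^sup>2"
    using f_bounds by (intro mult_left_mono power_mono) auto
  also have "\<dots> = real n * (2 * sqrt 2 * C / sqrt (real N))\<^sup>2"
    by (simp add: power_mult_distrib power_divide)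
  finally have "normn n (f - ?h) \<le> 2 * sqrt 2 * C / sqrt (real N)"
    using assms by (intro normn_le) auto
  moreover have "(INF h \<in> fspan (hplus n N ` {0..<N}). normn n (f - h)) \<le> normn n (f - ?h)"
    using step_approx_in_fspan by (intro cINF_lower bdd_belowI[of _ 0]) (auto simp: normn_nonneg)
  ultimately show ?thesis
    by linarith
qed

end
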